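(* For every $p\ge 1$, the joint distribution of the endhered patterns $\pi=12\cdots p$ and $\tau=p\cdots 21$ is symmetric: $a_{n,k,m}(\pi,\tau)=a_{n,k,m}(\tau,\pi)$ for all $n,k,m$. In particular, the number of matchings of size $n$ containing exactly $k$ occurrences of $21$ and exactly $m$ occurrences of $12$ equals the number of matchings of size $n$ containing exactly $m$ occurrences of $21$ and exactly $k$ occurrences of $12$.
   Context: A matching of size $n$ is a set of $n$ arcs $(a,b)$ with $1\le a<b\le 2n$ such that each point of $\{1,\dots,2n\}$ belongs to exactly one arc; $a$ is the starting point and $b$ the ending point. An endhered pattern of size $p$ is identified with a permutation $\pi=\pi_1\dots\pi_p$ of $\{1,\dots,p\}$ (the matching on $\{1,\dots,2p\}$ whose arc ending at $p+t$ starts at $\pi_t$). A matching $\mu$ contains $\pi$ at position $(i+1,j+1)$ (integers $i\ge0$, $j\ge i+p$) if for each $s=1,\dots,p$ the pair $(i+s,\,j+\pi^{-1}(s))$ is an arc of $\mu$. Thus an occurrence of $21$ is a pair of arcs $(i+1,j+2),(i+2,j+1)$ and an occurrence of $12$ is a pair of arcs $(i+1,j+1),(i+2,j+2)$. The number of occurrences of $\pi$ in $\mu$ is the number of positions at which $\mu$ contains $\pi$; $a_{n,k,m}(\pi,\tau)$ is the number of matchings of size $n$ with exactly $k$ occurrences of $\pi$ and exactly $m$ occurrences of $\tau$. *)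

theory Defs
  imports Main
begin

definition is_matching :: "nat \<Rightarrow> (nat \<times> nat) set \<Rightarrow> bool" where
  "is_matching n \<mu> \<longleftrightarrow>
     \<mu> \<subseteq> {(a, b). 1 \<le> a \<and> a < b \<and> b \<le> 2 * n} \<and>
     (\<forall>x\<in>{1..2*n}. \<exists>!e. e \<in> \<mu> \<and> (fst e = x \<or> snd e = x))"

text \<open>An endhered pattern of size p is a permutation pi of {1..p} (a function
  nat => nat, meaningful on {1..p}).  The matching mu contains pi at position
  (i+1, j+1) (with j >= i+p) if (i+s, j + pi^{-1}(s)) is an arc for s = 1..p.\<close>
definition contains_at :: "(nat \<times> nat) set \<Rightarrow> nat \<Rightarrow> (nat \<Rightarrow> nat) \<Rightarrow> nat \<Rightarrow> nat \<Rightarrow> bool" where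
  "contains_at \<mu> p \<pi> i j \<longleftrightarrow>
     i + p \<le> j \<and> (\<forall>s\<in>{1..p}. (i + s, j + inv_into {1..p} \<pi> s) \<in> \<mu>)"

definition occurrences :: "(nat \<times> nat) set \<Rightarrow> nat \<Rightarrow> (nat \<Rightarrow> nat) \<Rightarrow> nat" where
  "occurrences \<mu> p \<pi> = card {(i, j). contains_at \<mu> p \<pi> i j}"

definition a_count :: "nat \<Rightarrow> nat \<Rightarrow> nat \<Rightarrow> nat \<Rightarrow> (nat \<Rightarrow> nat) \<Rightarrow> (nat \<Rightarrow> nat) \<Rightarrow> nat" where
  "a_count p n k m \<pi> \<tau> =
     card {\<mu>. is_matching n \<mu> \<and> occurrences \<mu> p \<pi> = k \<and> occurrences \<mu> p \<tau> = m}"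

definition incr_pat :: "nat \<Rightarrow> nat \<Rightarrow> nat" where
  "incr_pat p t = t"

definition decr_pat :: "nat \<Rightarrow> nat \<Rightarrow> nat" where
  "decr_pat p t = p + 1 - t"

end

theory Submission
  imports Defs
begin

text \<open>Let \<open>C\<close> be the set of ending points of a matching. Reattaching every arc to the mirror
  image of its ending point within the maximal run of consecutive points of \<open>C\<close> containing it
  is an involution on matchings of size \<open>n\<close>; arcs stay forward because a starting point lies
  outside \<open>C\<close>, hence before the whole run of its ending point. The ending points of an
  occurrence of \<open>12\<cdots>p\<close> or \<open>p\<cdots>21\<close> at position \<open>(i+1, j+1)\<close> are the consecutive points
  \<open>j+1, \<dots>, j+p\<close>, so they lie in one run and get reversed: the occurrence becomes an occurrence
  of the other pattern with the same \<open>i\<close>. As an occurrence is determined by \<open>i\<close>, the involution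
  exchanges the numbers of occurrences of the two patterns.\<close>

lemma is_matching_iff:
  "is_matching n \<mu> \<longleftrightarrow>
     \<mu> \<subseteq> {(a, b). 1 \<le> a \<and> a < b \<and> b \<le> 2 * n} \<and> inj_on fst \<mu> \<and> inj_on snd \<mu> \<and>
     fst ` \<mu> \<inter> snd ` \<mu> = {} \<and> fst ` \<mu> \<union> snd ` \<mu> = {1..2*n}"
    (is "_ \<longleftrightarrow> ?arcs \<and> ?inj_fst \<and> ?inj_snd \<and> ?disjoint \<and> ?cover")
proof
  assume "is_matching n \<mu>"
  then have arcs: ?arcs
    and unique: "\<And>x. x \<in> {1..2*n} \<Longrightarrow> \<exists>!e. e \<in> \<mu> \<and> (fst e = x \<or> snd e = x)"
    unfolding is_matching_def by auto
  have same_arc: "e = e'"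
    if "e \<in> \<mu>" "e' \<in> \<mu>" "fst e = x \<or> snd e = x" "fst e' = x \<or> snd e' = x" for e e' x
  proof -
    have "x \<in> {1..2*n}" using that arcs by auto
    then show ?thesis using unique that by blast
  qed
  have ?inj_fst ?inj_snd by (auto intro!: inj_onI dest: same_arc)
  moreover have ?disjoint
  proof (rule ccontr)
    assume "\<not> ?disjoint"
    then obtain e e' where "e \<in> \<mu>" "e' \<in> \<mu>" "fst e = snd e'" by auto
    moreover from this have "e = e'" using same_arc by blast
    ultimately show False using arcs by auto
  qed
  moreover have ?cover
  proof
    show "fst ` \<mu> \<union> snd ` \<mu> \<subseteq> {1..2*n}" using arcs by force
    show "{1..2*n} \<subseteq> fst ` \<mu> \<union> snd ` \<mu>" using unique by blast
  qed
  ultimately show "?arcs \<and> ?inj_fst \<and> ?inj_snd \<and> ?disjoint \<and> ?cover"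
    using arcs by blast
next
  assume "?arcs \<and> ?inj_fst \<and> ?inj_snd \<and> ?disjoint \<and> ?cover"
  then have arcs: ?arcs and inj: ?inj_fst ?inj_snd and disjoint: ?disjoint and cover: ?cover
    by blast+
  have "\<exists>!e. e \<in> \<mu> \<and> (fst e = x \<or> snd e = x)" if "x \<in> {1..2*n}" for x
  proof -
    have "x \<in> fst ` \<mu> \<union> snd ` \<mu>" using cover that by simp
    then obtain e where "e \<in> \<mu>" "fst e = x \<or> snd e = x" by auto
    moreover have "d' = d"
      if touch: "d \<in> \<mu>" "d' \<in> \<mu>" "fst d = x \<or> snd d = x" "fst d' = x \<or> snd d' = x" for d d'
    proof -
      have "fst d \<noteq> snd d'" "snd d \<noteq> fst d'" using touch disjoint by blast+
      then consider "fst d' = fst d" | "snd d' = snd d" using touch by metis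
      then show ?thesis
        by cases (use inj touch in \<open>simp_all add: inj_on_eq_iff\<close>)
    qed
    ultimately show ?thesis by blast
  qed
  then show "is_matching n \<mu>"
    unfolding is_matching_def using arcs by blast
qed

definition maximal_run :: "nat set \<Rightarrow> nat \<Rightarrow> nat \<Rightarrow> bool" where
  "maximal_run C l h \<longleftrightarrow> 0 < l \<and> l \<le> h \<and> {l..h} \<subseteq> C \<and> l - 1 \<notin> C \<and> h + 1 \<notin> C"

text \<open>Mirror image of \<open>b\<close> in the maximal run of \<open>C\<close> containing it; unspecified for \<open>b \<notin> C\<close>.\<close>

definition run_reflect :: "nat set \<Rightarrow> nat \<Rightarrow> nat" where
  "run_reflect C b = (THE r. \<exists>l h. maximal_run C l h \<and> b \<in> {l..h} \<and> r = l + h - b)"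

lemma maximal_run_unique:
  assumes "maximal_run C l h" "b \<in> {l..h}" "maximal_run C l' h'" "b \<in> {l'..h'}"
  shows "l = l' \<and> h = h'"
proof -
  have "\<not> l < l'" if "maximal_run C l h" "b \<in> {l..h}" "maximal_run C l' h'" "b \<in> {l'..h'}"
    for l h l' h'
  proof
    assume "l < l'"
    then have "l' - 1 \<in> {l..h}" using that by auto
    then show False using that unfolding maximal_run_def by blast
  qed
  moreover have "\<not> h < h'" if "maximal_run C l h" "b \<in> {l..h}" "maximal_run C l' h'" "b \<in> {l'..h'}"
    for l h l' h'
  proof
    assume "h < h'"
    then have "h + 1 \<in> {l'..h'}" using that by auto
    then show False using that unfolding maximal_run_def by blast
  qed
  ultimately show ?thesis using assms by (meson linorder_neqE_nat)
qed

lemma run_reflect_eq: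
  assumes "maximal_run C l h" "b \<in> {l..h}"
  shows "run_reflect C b = l + h - b"
  unfolding run_reflect_def
  by (rule the_equality) (use assms maximal_run_unique in blast)+

lemma run_start_exists:
  fixes C :: "nat set"
  assumes "0 \<notin> C" "b \<in> C"
  obtains l where "0 < l" "l \<le> b" "{l..b} \<subseteq> C" "l - 1 \<notin> C"
proof -
  define l where "l = (LEAST l. {l..b} \<subseteq> C)"
  have l: "{l..b} \<subseteq> C" "\<And>l'. {l'..b} \<subseteq> C \<Longrightarrow> l \<le> l'"
    unfolding l_def by (rule LeastI[of _ b]) (use \<open>b \<in> C\<close> Least_le in auto)
  have "l \<le> b" using l(2)[of b] \<open>b \<in> C\<close> by simp
  have "0 < l"
    using l(1) \<open>l \<le> b\<close> \<open>0 \<notin> C\<close> by (auto intro: gr0I)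
  moreover have "l - 1 \<notin> C"
  proof
    assume "l - 1 \<in> C"
    moreover have "{l - 1..b} = insert (l - 1) {l..b}" using \<open>0 < l\<close> \<open>l \<le> b\<close> by auto
    ultimately have "{l - 1..b} \<subseteq> C" using l(1) by simp
    then show False using l(2)[of "l - 1"] \<open>0 < l\<close> by simp
  qed
  ultimately show ?thesis using that \<open>l \<le> b\<close> l(1) by blast
qed

lemma run_end_exists:
  fixes C :: "nat set"
  assumes "finite C" "b \<in> C"
  obtains h where "b \<le> h" "{b..h} \<subseteq> C" "h + 1 \<notin> C"
proof -
  define h where "h = (LEAST h. b \<le> h \<and> h + 1 \<notin> C)"
  obtain k where "\<forall>x\<in>C. x < k" using \<open>finite C\<close> finite_nat_set_iff_bounded by blast
  then have "b \<le> max b k \<and> max b k + 1 \<notin> C" by auto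
  then have h: "b \<le> h \<and> h + 1 \<notin> C" unfolding h_def by (rule LeastI)
  have "{b..h} \<subseteq> C"
  proof
    fix x assume x: "x \<in> {b..h}"
    show "x \<in> C"
    proof (cases "x = b")
      case False
      then have "b \<le> x - 1" "x - 1 < h" "x - 1 + 1 = x" using x by auto
      moreover have "\<not> (b \<le> x - 1 \<and> x - 1 + 1 \<notin> C)"
        using \<open>x - 1 < h\<close> unfolding h_def by (rule not_less_Least)
      ultimately show ?thesis by simp
    qed (use \<open>b \<in> C\<close> in simp)
  qed
  with h show ?thesis using that by blast
qed

lemma maximal_run_exists:
  assumes "finite C" "0 \<notin> C" "b \<in> C"
  obtains l h where "maximal_run C l h" "b \<in> {l..h}"
proof -
  obtain l where l: "0 < l" "l \<le> b" "{l..b} \<subseteq> C" "l - 1 \<notin> C"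
    using run_start_exists assms(2,3) by blast
  obtain h where h: "b \<le> h" "{b..h} \<subseteq> C" "h + 1 \<notin> C"
    using run_end_exists assms(1,3) by blast
  have "{l..h} \<subseteq> C"
    using l(3) h(2) by (meson atLeastAtMost_iff nat_le_linear subset_iff)
  then show ?thesis
    using that[of l h] l h unfolding maximal_run_def by auto
qed

lemma nonmember_before_maximal_run:
  assumes "maximal_run C l h" "b \<in> {l..h}" "x \<notin> C" "x \<le> b"
  shows "x < l"
  using assms unfolding maximal_run_def by (meson atLeastAtMost_iff not_le order_trans subsetD)

lemma
  assumes "finite C" "0 \<notin> C" "b \<in> C"
  shows run_reflect_mem: "run_reflect C b \<in> C"
    and run_reflect_run_reflect: "run_reflect C (run_reflect C b) = b"
proof -
  obtain l h where run: "maximal_run C l h" "b \<in> {l..h}"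
    using maximal_run_exists assms by blast
  then have "run_reflect C b = l + h - b" "l + h - b \<in> {l..h}"
    by (auto simp: run_reflect_eq)
  moreover from this run have "run_reflect C (l + h - b) = b"
    by (auto simp: run_reflect_eq)
  ultimately show "run_reflect C b \<in> C" "run_reflect C (run_reflect C b) = b"
    using run unfolding maximal_run_def by auto
qed

lemma bij_betw_run_reflect:
  assumes "finite C" "0 \<notin> C"
  shows "bij_betw (run_reflect C) C C"
  by (rule bij_betw_byWitness[where f' = "run_reflect C"])
    (use assms run_reflect_mem run_reflect_run_reflect in auto)

lemma run_reflect_gt:
  assumes "finite C" "0 \<notin> C" "b \<in> C" "a \<notin> C" "a < b"
  shows "a < run_reflect C b"
proof -
  obtain l h where run: "maximal_run C l h" "b \<in> {l..h}"
    using maximal_run_exists assms by blast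
  then have "a < l" using assms nonmember_before_maximal_run by simp
  then show ?thesis using run by (auto simp: run_reflect_eq)
qed

text \<open>A block of consecutive elements of \<open>C\<close> lies in a single maximal run.\<close>

lemma run_reflect_block:
  assumes "finite C" "0 \<notin> C" "0 < p" "{j + 1..j + p} \<subseteq> C" "x \<notin> C" "x \<le> j"
  obtains j' where "x \<le> j'" "\<And>u. u \<in> {1..p} \<Longrightarrow> run_reflect C (j + u) = j' + (p + 1 - u)"
proof -
  have "j + 1 \<in> C" using assms by auto
  then obtain l h where run: "maximal_run C l h" "j + 1 \<in> {l..h}"
    using maximal_run_exists assms by blast
  have "j + p \<le> h"
  proof (rule ccontr)
    assume "\<not> j + p \<le> h"
    then have "h + 1 \<in> {j + 1..j + p}" using run by auto
    then show False using run assms unfolding maximal_run_def by blast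
  qed
  moreover have "x < l" using run assms nonmember_before_maximal_run by simp
  moreover have "run_reflect C (j + u) = l + h - j - p - 1 + (p + 1 - u)" if "u \<in> {1..p}" for u
  proof -
    have "run_reflect C (j + u) = l + h - (j + u)"
      using run that \<open>j + p \<le> h\<close> by (intro run_reflect_eq) auto
    then show ?thesis using that \<open>j + p \<le> h\<close> \<open>x < l\<close> by simp
  qed
  ultimately show ?thesis using that[of "l + h - j - p - 1"] by simp
qed

lemma is_matching_apsnd:
  assumes "is_matching n \<mu>" "bij_betw f (snd ` \<mu>) (snd ` \<mu>)" "\<And>a b. (a, b) \<in> \<mu> \<Longrightarrow> a < f b"
  shows "is_matching n (apsnd f ` \<mu>)"
proof -
  from assms(1) have arcs: "\<mu> \<subseteq> {(a, b). 1 \<le> a \<and> a < b \<and> b \<le> 2 * n}"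
    and inj: "inj_on fst \<mu>" "inj_on snd \<mu>"
    and disjoint: "fst ` \<mu> \<inter> snd ` \<mu> = {}" and cover: "fst ` \<mu> \<union> snd ` \<mu> = {1..2*n}"
    unfolding is_matching_iff by blast+
  have fst_image: "fst ` apsnd f ` \<mu> = fst ` \<mu>"
    by (simp add: image_image)
  have snd_image: "snd ` apsnd f ` \<mu> = snd ` \<mu>"
    using bij_betw_imp_surj_on[OF assms(2)] by (simp add: image_image image_comp[symmetric])
  have "apsnd f ` \<mu> \<subseteq> {(a, b). 1 \<le> a \<and> a < b \<and> b \<le> 2 * n}"
  proof
    fix e assume "e \<in> apsnd f ` \<mu>"
    then obtain a b where ab: "(a, b) \<in> \<mu>" "e = (a, f b)" by auto
    then have "f b \<in> {1..2*n}" using snd_image cover by force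
    then show "e \<in> {(a, b). 1 \<le> a \<and> a < b \<and> b \<le> 2 * n}" using ab arcs assms(3) by auto
  qed
  moreover have "inj_on fst (apsnd f ` \<mu>)"
    by (rule inj_on_imageI) (simp add: comp_def inj(1))
  moreover have "inj_on snd (apsnd f ` \<mu>)"
    using comp_inj_on[OF inj(2) bij_betw_imp_inj_on[OF assms(2)]]
    by (intro inj_on_imageI) (simp add: comp_def)
  ultimately show ?thesis
    unfolding is_matching_iff using fst_image snd_image disjoint cover by simp
qed

definition reverse_closer_runs :: "(nat \<times> nat) set \<Rightarrow> (nat \<times> nat) set" where
  "reverse_closer_runs \<mu> = apsnd (run_reflect (snd ` \<mu>)) ` \<mu>"

lemma
  assumes "is_matching n \<mu>"
  shows finite_closers: "finite (snd ` \<mu>)"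
    and zero_notin_closers: "0 \<notin> snd ` \<mu>"
proof -
  have "snd ` \<mu> \<subseteq> {1..2*n}" using assms unfolding is_matching_iff by blast
  then show "finite (snd ` \<mu>)" "0 \<notin> snd ` \<mu>" by (auto intro: finite_subset)
qed

lemma is_matching_reverse_closer_runs:
  assumes "is_matching n \<mu>"
  shows "is_matching n (reverse_closer_runs \<mu>)"
  unfolding reverse_closer_runs_def
proof (rule is_matching_apsnd[OF assms])
  show "bij_betw (run_reflect (snd ` \<mu>)) (snd ` \<mu>) (snd ` \<mu>)"
    using assms finite_closers zero_notin_closers by (intro bij_betw_run_reflect)
  fix a b assume "(a, b) \<in> \<mu>"
  moreover have "fst ` \<mu> \<inter> snd ` \<mu> = {}" "\<mu> \<subseteq> {(a, b). a < b}"
    using assms unfolding is_matching_iff by auto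
  ultimately have "b \<in> snd ` \<mu>" "a \<notin> snd ` \<mu>" "a < b" by force+
  then show "a < run_reflect (snd ` \<mu>) b"
    using assms finite_closers zero_notin_closers by (intro run_reflect_gt)
qed

lemma reverse_closer_runs_involution:
  assumes "is_matching n \<mu>"
  shows "reverse_closer_runs (reverse_closer_runs \<mu>) = \<mu>"
proof -
  let ?C = "snd ` \<mu>"
  have reflect_twice: "run_reflect ?C (run_reflect ?C b) = b" if "b \<in> ?C" for b
    using assms that finite_closers zero_notin_closers by (intro run_reflect_run_reflect)
  have "snd ` reverse_closer_runs \<mu> = run_reflect ?C ` ?C"
    unfolding reverse_closer_runs_def by (simp add: image_image)
  also have "\<dots> = ?C"
    using assms finite_closers zero_notin_closers bij_betw_run_reflect bij_betw_imp_surj_on by metis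
  finally have "reverse_closer_runs (reverse_closer_runs \<mu>)
      = apsnd (run_reflect ?C) ` apsnd (run_reflect ?C) ` \<mu>"
    unfolding reverse_closer_runs_def by simp
  also have "\<dots> = \<mu>"
    using reflect_twice by (force simp: image_image image_iff)
  finally show ?thesis .
qed

lemma contains_at_incr_pat_iff:
  "contains_at \<mu> p (incr_pat p) i j \<longleftrightarrow> i + p \<le> j \<and> (\<forall>s\<in>{1..p}. (i + s, j + s) \<in> \<mu>)"
proof -
  have "inv_into {1..p} (incr_pat p) s = s" if "s \<in> {1..p}" for s
    using that by (intro inv_into_f_eq) (auto simp: inj_on_def incr_pat_def)
  then show ?thesis unfolding contains_at_def by auto
qed

lemma contains_at_decr_pat_iff:
  "contains_at \<mu> p (decr_pat p) i j \<longleftrightarrow> i + p \<le> j \<and> (\<forall>s\<in>{1..p}. (i + s, j + (p + 1 - s)) \<in> \<mu>)"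
proof -
  have "inv_into {1..p} (decr_pat p) s = p + 1 - s" if "s \<in> {1..p}" for s
    using that by (intro inv_into_f_eq) (auto simp: inj_on_def decr_pat_def)
  then show ?thesis unfolding contains_at_def by auto
qed

lemma reverse_closer_runs_block:
  assumes "is_matching n \<mu>" "0 < p" "i + p \<le> j" "\<sigma> ` {1..p} = {1..p}"
    and arcs: "\<And>s. s \<in> {1..p} \<Longrightarrow> (i + s, j + \<sigma> s) \<in> \<mu>"
  obtains j' where "i + p \<le> j'"
    "\<And>s. s \<in> {1..p} \<Longrightarrow> (i + s, j' + (p + 1 - \<sigma> s)) \<in> reverse_closer_runs \<mu>"
proof -
  let ?C = "snd ` \<mu>"
  have "{j + 1..j + p} \<subseteq> ?C"
  proof
    fix b assume "b \<in> {j + 1..j + p}"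
    then have "b - j \<in> \<sigma> ` {1..p}" using assms(4) by auto
    then obtain s where "s \<in> {1..p}" "\<sigma> s = b - j" by auto
    then have "(i + s, b) \<in> \<mu>" using arcs[of s] \<open>b \<in> {j + 1..j + p}\<close> by auto
    then show "b \<in> ?C" by force
  qed
  moreover have "i + p \<notin> ?C"
  proof -
    have "(i + p, j + \<sigma> p) \<in> \<mu>" using arcs \<open>0 < p\<close> by simp
    then have "i + p \<in> fst ` \<mu>" by force
    then show ?thesis using assms(1) unfolding is_matching_iff by blast
  qed
  ultimately obtain j' where "i + p \<le> j'"
    and reflect: "\<And>u. u \<in> {1..p} \<Longrightarrow> run_reflect ?C (j + u) = j' + (p + 1 - u)"
    using run_reflect_block assms(1-3) finite_closers zero_notin_closers by metis
  moreover have "(i + s, j' + (p + 1 - \<sigma> s)) \<in> reverse_closer_runs \<mu>" if "s \<in> {1..p}" for s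
  proof -
    have "\<sigma> s \<in> {1..p}" using that assms(4) by blast
    then have "apsnd (run_reflect ?C) (i + s, j + \<sigma> s) = (i + s, j' + (p + 1 - \<sigma> s))"
      using reflect by simp
    then show ?thesis unfolding reverse_closer_runs_def using arcs[OF that] by (metis image_eqI)
  qed
  ultimately show ?thesis using that by blast
qed

definition occurrence_starts :: "(nat \<times> nat) set \<Rightarrow> nat \<Rightarrow> (nat \<Rightarrow> nat) \<Rightarrow> nat set" where
  "occurrence_starts \<mu> p \<pi> = {i. \<exists>j. contains_at \<mu> p \<pi> i j}"

text \<open>An occurrence at \<open>(i+1, j+1)\<close> is determined by \<open>i\<close>: the arc starting at \<open>i+1\<close> fixes \<open>j\<close>.\<close>

lemma card_occurrence_starts:
  assumes "inj_on fst \<mu>" "0 < p"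
  shows "card (occurrence_starts \<mu> p \<pi>) = occurrences \<mu> p \<pi>"
proof -
  let ?occ = "{(i, j). contains_at \<mu> p \<pi> i j}"
  have first_arc: "(i + 1, j + inv_into {1..p} \<pi> 1) \<in> \<mu>" if "contains_at \<mu> p \<pi> i j" for i j
    using that \<open>0 < p\<close> unfolding contains_at_def by (auto dest: bspec[where x = 1])
  have "inj_on fst ?occ"
  proof (rule inj_onI, clarsimp)
    fix i j j' assume "contains_at \<mu> p \<pi> i j" "contains_at \<mu> p \<pi> i j'"
    then have "(i + 1, j + inv_into {1..p} \<pi> 1) \<in> \<mu>" "(i + 1, j' + inv_into {1..p} \<pi> 1) \<in> \<mu>"
      using first_arc by blast+
    then show "j = j'" using inj_onD[OF assms(1)] by fastforce
  qed
  moreover have "occurrence_starts \<mu> p \<pi> = fst ` ?occ"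
    unfolding occurrence_starts_def by force
  ultimately show ?thesis unfolding occurrences_def by (simp add: card_image)
qed

lemma
  assumes "is_matching n \<mu>" "0 < p"
  shows occurrence_starts_incr_subset:
      "occurrence_starts \<mu> p (incr_pat p) \<subseteq> occurrence_starts (reverse_closer_runs \<mu>) p (decr_pat p)"
    and occurrence_starts_decr_subset:
      "occurrence_starts \<mu> p (decr_pat p) \<subseteq> occurrence_starts (reverse_closer_runs \<mu>) p (incr_pat p)"
proof -
  show "occurrence_starts \<mu> p (incr_pat p) \<subseteq> occurrence_starts (reverse_closer_runs \<mu>) p (decr_pat p)"
  proof
    fix i assume "i \<in> occurrence_starts \<mu> p (incr_pat p)"
    then obtain j where "i + p \<le> j" and arcs: "\<And>s. s \<in> {1..p} \<Longrightarrow> (i + s, j + s) \<in> \<mu>"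
      unfolding occurrence_starts_def contains_at_incr_pat_iff by blast
    obtain j' where "i + p \<le> j'"
      "\<And>s. s \<in> {1..p} \<Longrightarrow> (i + s, j' + (p + 1 - s)) \<in> reverse_closer_runs \<mu>"
      using reverse_closer_runs_block[OF assms \<open>i + p \<le> j\<close> image_ident arcs] by blast
    then show "i \<in> occurrence_starts (reverse_closer_runs \<mu>) p (decr_pat p)"
      unfolding occurrence_starts_def contains_at_decr_pat_iff by blast
  qed
  show "occurrence_starts \<mu> p (decr_pat p) \<subseteq> occurrence_starts (reverse_closer_runs \<mu>) p (incr_pat p)"
  proof
    fix i assume "i \<in> occurrence_starts \<mu> p (decr_pat p)"
    then obtain j where "i + p \<le> j" and arcs: "\<And>s. s \<in> {1..p} \<Longrightarrow> (i + s, j + (p + 1 - s)) \<in> \<mu>"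
      unfolding occurrence_starts_def contains_at_decr_pat_iff by blast
    have flip: "(\<lambda>s. p + 1 - s) ` {1..p} = {1..p}"
    proof
      show "{1..p} \<subseteq> (\<lambda>s. p + 1 - s) ` {1..p}"
      proof
        fix u assume "u \<in> {1..p}"
        then have "p + 1 - u \<in> {1..p}" "u = p + 1 - (p + 1 - u)" by auto
        then show "u \<in> (\<lambda>s. p + 1 - s) ` {1..p}" by (rule rev_image_eqI)
      qed
    qed auto
    obtain j' where "i + p \<le> j'"
      and flipped: "\<And>s. s \<in> {1..p} \<Longrightarrow> (i + s, j' + (p + 1 - (p + 1 - s))) \<in> reverse_closer_runs \<mu>"
      using reverse_closer_runs_block[OF assms \<open>i + p \<le> j\<close> flip arcs] by blast
    have "(i + s, j' + s) \<in> reverse_closer_runs \<mu>" if "s \<in> {1..p}" for s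
      using flipped[OF that] that by simp
    then show "i \<in> occurrence_starts (reverse_closer_runs \<mu>) p (incr_pat p)"
      unfolding occurrence_starts_def contains_at_incr_pat_iff using \<open>i + p \<le> j'\<close> by blast
  qed
qed

lemma
  assumes "is_matching n \<mu>" "0 < p"
  shows occurrences_decr_reverse_closer_runs:
      "occurrences (reverse_closer_runs \<mu>) p (decr_pat p) = occurrences \<mu> p (incr_pat p)"
    and occurrences_incr_reverse_closer_runs:
      "occurrences (reverse_closer_runs \<mu>) p (incr_pat p) = occurrences \<mu> p (decr_pat p)"
proof -
  have rev: "is_matching n (reverse_closer_runs \<mu>)"
    using assms(1) by (rule is_matching_reverse_closer_runs)
  have "occurrence_starts (reverse_closer_runs \<mu>) p (decr_pat p) = occurrence_starts \<mu> p (incr_pat p)"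
    "occurrence_starts (reverse_closer_runs \<mu>) p (incr_pat p) = occurrence_starts \<mu> p (decr_pat p)"
    using occurrence_starts_incr_subset[OF assms] occurrence_starts_decr_subset[OF assms]
      occurrence_starts_incr_subset[OF rev assms(2)] occurrence_starts_decr_subset[OF rev assms(2)]
      reverse_closer_runs_involution[OF assms(1)] by auto
  moreover have "inj_on fst \<mu>" "inj_on fst (reverse_closer_runs \<mu>)"
    using assms(1) rev unfolding is_matching_iff by blast+
  ultimately show "occurrences (reverse_closer_runs \<mu>) p (decr_pat p) = occurrences \<mu> p (incr_pat p)"
    "occurrences (reverse_closer_runs \<mu>) p (incr_pat p) = occurrences \<mu> p (decr_pat p)"
    using card_occurrence_starts assms(2) by metis+
qed

lemma a_count_incr_decr_symmetric:
  assumes "0 < p"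
  shows "a_count p n k m (incr_pat p) (decr_pat p) = a_count p n k m (decr_pat p) (incr_pat p)"
proof -
  let ?A = "{\<mu>. is_matching n \<mu> \<and> occurrences \<mu> p (incr_pat p) = k \<and> occurrences \<mu> p (decr_pat p) = m}"
  let ?B = "{\<mu>. is_matching n \<mu> \<and> occurrences \<mu> p (decr_pat p) = k \<and> occurrences \<mu> p (incr_pat p) = m}"
  have "bij_betw reverse_closer_runs ?A ?B"
    by (rule bij_betw_byWitness[where f' = reverse_closer_runs])
      (use assms is_matching_reverse_closer_runs reverse_closer_runs_involution
        occurrences_decr_reverse_closer_runs occurrences_incr_reverse_closer_runs in auto)
  then show ?thesis unfolding a_count_def by (rule bij_betw_same_card)
qed

theorem corollary1:
  shows "(\<forall>p n k m. p \<ge> 1 \<longrightarrow>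
            a_count p n k m (incr_pat p) (decr_pat p) = a_count p n k m (decr_pat p) (incr_pat p))
       \<and> (\<forall>n k m.
            card {\<mu>. is_matching n \<mu> \<and> occurrences \<mu> 2 (decr_pat 2) = k \<and> occurrences \<mu> 2 (incr_pat 2) = m}
          = card {\<mu>. is_matching n \<mu> \<and> occurrences \<mu> 2 (decr_pat 2) = m \<and> occurrences \<mu> 2 (incr_pat 2) = k})"
proof (intro conjI allI impI)
  fix p n k m :: nat
  assume "p \<ge> 1"
  then show "a_count p n k m (incr_pat p) (decr_pat p) = a_count p n k m (decr_pat p) (incr_pat p)"
    by (intro a_count_incr_decr_symmetric) simp
next
  fix n k m :: nat
  have "card {\<mu>. is_matching n \<mu> \<and> occurrences \<mu> 2 (decr_pat 2) = k \<and> occurrences \<mu> 2 (incr_pat 2) = m}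
      = a_count 2 n m k (incr_pat 2) (decr_pat 2)"
    unfolding a_count_def by (metis conj_commute)
  also have "\<dots> = a_count 2 n m k (decr_pat 2) (incr_pat 2)"
    by (rule a_count_incr_decr_symmetric) simp
  finally show "card {\<mu>. is_matching n \<mu> \<and> occurrences \<mu> 2 (decr_pat 2) = k \<and> occurrences \<mu> 2 (incr_pat 2) = m}
      = card {\<mu>. is_matching n \<mu> \<and> occurrences \<mu> 2 (decr_pat 2) = m \<and> occurrences \<mu> 2 (incr_pat 2) = k}"
    unfolding a_count_def .
qed

end
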